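(* Consider the state space model and the extended alive particle filter (APF) described in the context, with $N\ge1$. The marginal likelihood estimator $$\widehat Z = \prod_{t=1}^T \frac{\sum_{n=1}^N w_t^{(n)}}{P_t - 1}$$ is unbiased: $\mathbb{E}[\widehat Z] = p(y_{1:T})$, where $p(y_{1:T})$ is the marginal density of the observations under the model.
   Context: State space model: $x_0\sim p(x_0)$; for $t=1,\dots,T$, $x_t \sim f_t(x_t\mid x_{t-1})$ and $y_t\sim g_t(y_t\mid x_t)$; the observations $y_1,\dots,y_T$ are fixed. Extended alive particle filter with $N$ particles: initially draw $x_0^{(1)},\dots,x_0^{(N)}$ independently from $p(x_0)$ and set $w_0^{(n)}=1$. For each $t=1,\dots,T$: set $P_t\gets 0$; for each $n=1,\dots,N+1$, repeat the following until the weight is positive: draw an index $a$ from the categorical distribution with probabilities $w_{t-1}^{(m)}/\sum_{l=1}^N w_{t-1}^{(l)}$, $m=1,\dots,N$; draw $x_t^{(n)}\sim f_t(\cdot\mid x_{t-1}^{(a)})$; increment $P_t$ by one; set $w_t^{(n)} = g_t(y_t\mid x_t^{(n)})$. Thus $P_t$ is the total number of propagations at time $t$, including those made for the $(N+1)$-th particle, whose state and weight are otherwise never used. *)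

theory Defs
  imports "HOL-Probability.Probability"
begin

text \<open>
  Observations y_1..y_T are fixed and absorbed into the likelihoods g t x = g_t(y_t | x).
  Kernels f t x = f_t(. | x) are probability measures on M; p0 is the initial law.
  A particle system is a function xs :: nat => 'a on indices {..<N} (extensional).
\<close>

text \<open>Weights w_{t-1} used when propagating at time t (w_0 = 1).\<close>
definition apf_w :: "(nat \<Rightarrow> 'a \<Rightarrow> real) \<Rightarrow> nat \<Rightarrow> (nat \<Rightarrow> 'a) \<Rightarrow> nat \<Rightarrow> real" where
  "apf_w g t xs m = (if t = 1 then 1 else g (t - 1) (xs m))"

text \<open>Law of one propagation at time t: draw ancestor a with probability
  w_{t-1}^a / sum_l w_{t-1}^l, then x ~ f t (xs a).\<close>
definition apf_Q :: "'a measure \<Rightarrow> (nat \<Rightarrow> 'a \<Rightarrow> 'a measure) \<Rightarrow> (nat \<Rightarrow> 'a \<Rightarrow> real)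
    \<Rightarrow> nat \<Rightarrow> nat \<Rightarrow> (nat \<Rightarrow> 'a) \<Rightarrow> 'a measure" where
  "apf_Q M f g N t xs = measure_of (space M) (sets M)
     (\<lambda>A. \<Sum>m<N. ennreal (apf_w g t xs m / (\<Sum>l<N. apf_w g t xs l)) * emeasure (f t (xs m)) A)"

text \<open>Measurable space of the algorithm state: (particles, running estimate).\<close>
definition apf_SS :: "'a measure \<Rightarrow> nat \<Rightarrow> ((nat \<Rightarrow> 'a) \<times> real) measure" where
  "apf_SS M N = (\<Pi>\<^sub>M i\<in>{..<N}. M) \<Otimes>\<^sub>M borel"

text \<open>The repeat-until loops at time t, run on the i.i.d. sequence omega of all propagations
  made at time t (omega !! k is the (k+1)-th propagated state).  The particles
  x_t^(1..N+1) are the states at the first N+1 positions with positive weight, and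
  P_t is the number of propagations up to and including the (N+1)-th success.
  If fewer than N+1 successes ever occur (the algorithm does not terminate), the run
  contributes estimate 0.\<close>
definition apf_step_fn :: "(nat \<Rightarrow> 'a \<Rightarrow> real) \<Rightarrow> nat \<Rightarrow> nat \<Rightarrow> (nat \<Rightarrow> 'a) \<Rightarrow> real
    \<Rightarrow> 'a stream \<Rightarrow> (nat \<Rightarrow> 'a) \<times> real" where
  "apf_step_fn g N t xs Z \<omega> =
     (let A = {k. 0 < g t (\<omega> !! k)} in
      if finite A \<and> card A \<le> N then (xs, 0)
      else let xs' = restrict (\<lambda>n. \<omega> !! enumerate A n) {..<N};
               P = enumerate A N + 1
           in (xs', Z * ((\<Sum>n<N. g t (xs' n)) / real (P - 1))))"

definition apf_step :: "'a measure \<Rightarrow> (nat \<Rightarrow> 'a \<Rightarrow> 'a measure) \<Rightarrow> (nat \<Rightarrow> 'a \<Rightarrow> real)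
    \<Rightarrow> nat \<Rightarrow> nat \<Rightarrow> (nat \<Rightarrow> 'a) \<times> real \<Rightarrow> ((nat \<Rightarrow> 'a) \<times> real) measure" where
  "apf_step M f g N t s =
     distr (stream_space (apf_Q M f g N t (fst s))) (apf_SS M N) (apf_step_fn g N t (fst s) (snd s))"

fun apf_run :: "'a measure \<Rightarrow> 'a measure \<Rightarrow> (nat \<Rightarrow> 'a \<Rightarrow> 'a measure) \<Rightarrow> (nat \<Rightarrow> 'a \<Rightarrow> real)
    \<Rightarrow> nat \<Rightarrow> nat \<Rightarrow> ((nat \<Rightarrow> 'a) \<times> real) measure" where
  "apf_run M p0 f g N 0 = distr (\<Pi>\<^sub>M i\<in>{..<N}. p0) (apf_SS M N) (\<lambda>xs. (xs, 1))"
| "apf_run M p0 f g N (Suc t) = apf_run M p0 f g N t \<bind> apf_step M f g N (Suc t)"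

text \<open>Backward likelihood: apf_bk k t x = p(y_{t+1:t+k} | x_t = x).\<close>
fun apf_bk :: "(nat \<Rightarrow> 'a \<Rightarrow> 'a measure) \<Rightarrow> (nat \<Rightarrow> 'a \<Rightarrow> real) \<Rightarrow> nat \<Rightarrow> nat \<Rightarrow> 'a \<Rightarrow> ennreal" where
  "apf_bk f g 0 t x = 1"
| "apf_bk f g (Suc k) t x =
     (\<integral>\<^sup>+ x'. ennreal (g (Suc t) x') * apf_bk f g k (Suc t) x' \<partial>f (Suc t) x)"

definition apf_marginal :: "'a measure \<Rightarrow> (nat \<Rightarrow> 'a \<Rightarrow> 'a measure) \<Rightarrow> (nat \<Rightarrow> 'a \<Rightarrow> real)
    \<Rightarrow> nat \<Rightarrow> ennreal" where
  "apf_marginal p0 f g T = (\<integral>\<^sup>+ x0. apf_bk f g T 0 x0 \<partial>p0)"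

end

theory Submission
  imports Defs
begin

definition count_below :: "(nat \<Rightarrow> bool) \<Rightarrow> nat \<Rightarrow> nat" where
  "count_below P m = card {j. j < m \<and> P j}"

lemma count_below_0 [simp]: "count_below P 0 = 0"
  by (simp add: count_below_def)

lemma count_below_Suc: "count_below P (Suc m) = count_below P m + (if P m then 1 else 0)"
proof -
  have "{j. j < Suc m \<and> P j} = (if P m then insert m {j. j < m \<and> P j} else {j. j < m \<and> P j})"
    by (auto simp: less_Suc_eq)
  then show ?thesis
    by (simp add: count_below_def)
qed

lemma count_below_strict_mono:
  assumes "a < b" "P a"
  shows "count_below P a < count_below P b"
proof -
  have "insert a {j. j < a \<and> P j} \<subseteq> {j. j < b \<and> P j}"
    using assms by auto
  then have "card (insert a {j. j < a \<and> P j}) \<le> card {j. j < b \<and> P j}"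
    by (intro card_mono) auto
  then show ?thesis
    by (simp add: count_below_def)
qed

lemma count_below_inj:
  assumes "P m" "P m'" "count_below P m = count_below P m'"
  shows "m = m'"
  using count_below_strict_mono[of m m' P] count_below_strict_mono[of m' m P] assms
  by (cases m m' rule: linorder_cases) auto

lemma enumerate_in_set':
  fixes A :: "nat set"
  assumes "infinite A \<or> n < card A"
  shows "enumerate A n \<in> A"
  using assms enumerate_in_set finite_enumerate_in_set by blast

lemma enumerate_strict_mono':
  fixes A :: "nat set"
  assumes "infinite A \<or> n < card A" "m < n"
  shows "enumerate A m < enumerate A n"
  using assms enumerate_mono finite_enumerate_mono by blast

lemma le_enumerate':
  fixes A :: "nat set"
  assumes "infinite A \<or> n < card A"
  shows "n \<le> enumerate A n"
  using assms le_enumerate finite_le_enumerate by blast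

lemma inj_on_enumerate_lessThan:
  fixes A :: "nat set"
  assumes "infinite A \<or> K < card A"
  shows "inj_on (enumerate A) {..<K}"
proof (rule inj_onI)
  fix m n assume "m \<in> {..<K}" "n \<in> {..<K}" "enumerate A m = enumerate A n"
  then show "m = n"
    using enumerate_strict_mono'[of A m n] enumerate_strict_mono'[of A n m] assms
    by (cases m n rule: linorder_cases) auto
qed

lemma enumerate_surj':
  fixes A :: "nat set"
  assumes "j \<in> A"
  obtains n where "infinite A \<or> n < card A" "enumerate A n = j"
proof (cases "finite A")
  case True
  then show ?thesis
    using finite_enumerate_Ex[OF True assms] that by blast
next
  case False
  then show ?thesis
    using enumerate_Ex[OF False assms] that by blast
qed

lemma enumerate_elements_below:
  fixes A :: "nat set"
  assumes K: "infinite A \<or> K < card A"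
  shows "{j\<in>A. j < enumerate A K} = enumerate A ` {..<K}"
proof (intro equalityI subsetI)
  fix j assume j: "j \<in> {j\<in>A. j < enumerate A K}"
  then obtain n where n: "infinite A \<or> n < card A" "enumerate A n = j"
    using enumerate_surj' by blast
  have "n < K"
  proof (rule ccontr)
    assume "\<not> n < K"
    then have "enumerate A K \<le> enumerate A n"
      using enumerate_strict_mono'[OF n(1), of K] by (cases "K = n") auto
    then show False
      using j n(2) by simp
  qed
  then show "j \<in> enumerate A ` {..<K}"
    using n(2) by blast
next
  fix j assume "j \<in> enumerate A ` {..<K}"
  then obtain n where "n < K" "j = enumerate A n"
    by blast
  with K show "j \<in> {j\<in>A. j < enumerate A K}"
    by (auto intro: enumerate_in_set' enumerate_strict_mono')
qed

lemma count_below_enumerate: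
  assumes "infinite {j. P j} \<or> K < card {j. P j}"
  shows "P (enumerate {j. P j} K)" "count_below P (enumerate {j. P j} K) = K"
proof -
  show "P (enumerate {j. P j} K)"
    using enumerate_in_set'[OF assms] by simp
  have "{j. j < enumerate {j. P j} K \<and> P j} = enumerate {j. P j} ` {..<K}"
    using enumerate_elements_below[OF assms] by auto
  then show "count_below P (enumerate {j. P j} K) = K"
    using inj_on_enumerate_lessThan[OF assms] by (simp add: count_below_def card_image)
qed

lemma ex_count_below_eq_iff:
  "(\<exists>m. P m \<and> count_below P m = K) \<longleftrightarrow> infinite {j. P j} \<or> K < card {j. P j}"
proof
  assume "\<exists>m. P m \<and> count_below P m = K"
  then obtain m where m: "P m" "count_below P m = K"
    by blast
  show "infinite {j. P j} \<or> K < card {j. P j}"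
  proof (cases "finite {j. P j}")
    case True
    moreover have "insert m {j. j < m \<and> P j} \<subseteq> {j. P j}"
      using m by auto
    ultimately have "card (insert m {j. j < m \<and> P j}) \<le> card {j. P j}"
      by (intro card_mono)
    then show ?thesis
      using m by (simp add: count_below_def)
  qed simp
qed (use count_below_enumerate in blast)

lemma enumerate_eq_Least:
  assumes "infinite {j. P j} \<or> K < card {j. P j}"
  shows "enumerate {j. P j} K = (LEAST m. P m \<and> count_below P m = K)"
proof (rule Least_equality[symmetric])
  fix m assume "P m \<and> count_below P m = K"
  then show "enumerate {j. P j} K \<le> m"
    using count_below_enumerate[OF assms] count_below_inj[of P m "enumerate {j. P j} K"] by simp
qed (use count_below_enumerate[OF assms] in simp)

lemma measurable_count_below [measurable]:
  assumes [measurable]: "\<And>j. Measurable.pred M (P j)"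
  shows "(\<lambda>x. count_below (\<lambda>j. P j x) m) \<in> M \<rightarrow>\<^sub>M count_space UNIV"
proof (induction m)
  case (Suc m)
  note [measurable] = Suc.IH
  show ?case
    unfolding count_below_Suc
    by (rule measurable_compose_countable[where g = "\<lambda>x. count_below (\<lambda>j. P j x) m"]) measurable
qed simp

definition sinsert :: "nat \<Rightarrow> 'a \<Rightarrow> 'a stream \<Rightarrow> 'a stream" where
  "sinsert k x \<omega> = stake k \<omega> @- x ## sdrop k \<omega>"

lemma sinsert_0 [simp]: "sinsert 0 x \<omega> = x ## \<omega>"
  by (simp add: sinsert_def)

lemma sinsert_Suc [simp]: "sinsert (Suc k) x (y ## \<omega>) = y ## sinsert k x \<omega>"
  by (simp add: sinsert_def)

lemma snth_sinsert:
  "sinsert k x \<omega> !! i = (if i < k then \<omega> !! i else if i = k then x else \<omega> !! (i - 1))"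
  by (auto simp: sinsert_def shift_snth Stream_snth sdrop_snth split: nat.split
      intro!: arg_cong[where f = "snth \<omega>"])

lemma measurable_sinsert [measurable (raw)]:
  assumes [measurable]: "f \<in> N \<rightarrow>\<^sub>M M" "g \<in> N \<rightarrow>\<^sub>M stream_space M"
  shows "(\<lambda>y. sinsert k (f y) (g y)) \<in> N \<rightarrow>\<^sub>M stream_space M"
  unfolding sinsert_def by measurable

lemma (in prob_space) nn_integral_stream_space_sinsert:
  assumes "F \<in> borel_measurable (stream_space M)"
  shows "(\<integral>\<^sup>+\<omega>. F \<omega> \<partial>stream_space M) = (\<integral>\<^sup>+x. \<integral>\<^sup>+\<omega>. F (sinsert k x \<omega>) \<partial>stream_space M \<partial>M)"
  using assms
proof (induction k arbitrary: F)
  case 0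
  then show ?case
    by (simp add: nn_integral_stream_space)
next
  case (Suc k)
  note [measurable] = Suc.prems
  interpret S: prob_space "stream_space M"
    by (rule prob_space_stream_space)
  interpret pair_sigma_finite M M ..
  have "(\<integral>\<^sup>+\<omega>. F \<omega> \<partial>stream_space M) = (\<integral>\<^sup>+y. \<integral>\<^sup>+\<omega>. F (y ## \<omega>) \<partial>stream_space M \<partial>M)"
    by (rule nn_integral_stream_space) simp
  also have "\<dots> = (\<integral>\<^sup>+y. \<integral>\<^sup>+x. \<integral>\<^sup>+\<omega>. F (y ## sinsert k x \<omega>) \<partial>stream_space M \<partial>M \<partial>M)"
    by (intro nn_integral_cong Suc.IH) simp
  also have "\<dots> = (\<integral>\<^sup>+x. \<integral>\<^sup>+y. \<integral>\<^sup>+\<omega>. F (y ## sinsert k x \<omega>) \<partial>stream_space M \<partial>M \<partial>M)"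
    by (rule Fubini') measurable
  also have "\<dots> = (\<integral>\<^sup>+x. \<integral>\<^sup>+\<omega>. F (sinsert (Suc k) x \<omega>) \<partial>stream_space M \<partial>M)"
  proof (rule nn_integral_cong)
    fix x assume [measurable]: "x \<in> space M"
    show "(\<integral>\<^sup>+y. \<integral>\<^sup>+\<omega>. F (y ## sinsert k x \<omega>) \<partial>stream_space M \<partial>M) =
        (\<integral>\<^sup>+\<omega>. F (sinsert (Suc k) x \<omega>) \<partial>stream_space M)"
      by (subst (2) nn_integral_stream_space) simp_all
  qed
  finally show ?case .
qed

lemma count_below_sinsert:
  assumes "j < m"
  shows "count_below (\<lambda>i. P (sinsert j x \<omega> !! i)) m =
    count_below (\<lambda>i. P (\<omega> !! i)) (m - 1) + (if P x then 1 else 0)"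
  using assms
proof (induction m)
  case (Suc m)
  show ?case
  proof (cases "j < m")
    case True
    then obtain m' where "m = Suc m'"
      by (cases m) auto
    then show ?thesis
      using Suc.IH[OF True] True by (simp add: count_below_Suc snth_sinsert)
  next
    case False
    then have "j = m"
      using Suc.prems by simp
    have "count_below (\<lambda>i. P (sinsert j x \<omega> !! i)) m = count_below (\<lambda>i. P (\<omega> !! i)) m"
      unfolding count_below_def using \<open>j = m\<close> by (intro arg_cong[where f = card]) (auto simp: snth_sinsert)
    then show ?thesis
      using \<open>j = m\<close> by (simp add: count_below_Suc snth_sinsert)
  qed
qed simp

lemma (in prob_space) emeasure_stream_space_Stream_split:
  assumes X: "X \<in> sets (stream_space M)" and A: "A \<in> sets M"
    and XY: "\<And>t \<omega>. t \<in> space M \<Longrightarrow> \<omega> \<in> streams (space M) \<Longrightarrow> t ## \<omega> \<in> X \<longleftrightarrow> t \<in> A \<and> \<omega> \<in> Y"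
    and Y: "Y \<subseteq> streams (space M)"
  shows "emeasure (stream_space M) X = emeasure M A * emeasure (stream_space M) Y"
proof -
  have "emeasure (stream_space M) X =
      (\<integral>\<^sup>+t. emeasure (stream_space M) {\<omega>\<in>space (stream_space M). t ## \<omega> \<in> X} \<partial>M)"
    using X by (rule emeasure_stream_space)
  also have "\<dots> = (\<integral>\<^sup>+t. emeasure (stream_space M) Y * indicator A t \<partial>M)"
  proof (rule nn_integral_cong)
    fix t assume "t \<in> space M"
    then have "{\<omega>\<in>space (stream_space M). t ## \<omega> \<in> X} = (if t \<in> A then Y else {})"
      using XY Y by (auto simp: space_stream_space)
    then show "emeasure (stream_space M) {\<omega>\<in>space (stream_space M). t ## \<omega> \<in> X} =
        emeasure (stream_space M) Y * indicator A t"
      by (simp add: indicator_def)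
  qed
  also have "\<dots> = emeasure (stream_space M) Y * emeasure M A"
    using A by (rule nn_integral_cmult_indicator)
  finally show ?thesis
    by (simp add: mult.commute)
qed

lemma (in prob_space) AE_stream_space_infinitely_often:
  assumes [measurable]: "Measurable.pred M P" and pos: "emeasure M {x\<in>space M. P x} \<noteq> 0"
  shows "AE \<omega> in stream_space M. infinite {j. P (\<omega> !! j)}"
proof -
  interpret S: prob_space "stream_space M"
    by (rule prob_space_stream_space)
  define B where "B m = {\<omega>\<in>space (stream_space M). \<forall>i\<ge>m. \<not> P (\<omega> !! i)}" for m
  have B_sets [measurable]: "B m \<in> sets (stream_space M)" for m
    unfolding B_def by measurable
  have B_streams: "B m \<subseteq> streams (space M)" for m
    by (auto simp: B_def space_stream_space)
  have all_from_Suc: "(\<forall>i\<ge>Suc m. Q i) \<longleftrightarrow> (\<forall>i\<ge>m. Q (Suc i))" for Q :: "nat \<Rightarrow> bool" and m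
  proof (intro iffI allI impI)
    fix i assume "\<forall>i\<ge>m. Q (Suc i)" "Suc m \<le> i"
    then show "Q i"
      by (cases i) simp_all
  qed simp
  have all_nat: "(\<forall>i. Q i) \<longleftrightarrow> Q 0 \<and> (\<forall>i. Q (Suc i))" for Q :: "nat \<Rightarrow> bool"
  proof (intro iffI allI)
    fix i assume "Q 0 \<and> (\<forall>i. Q (Suc i))"
    then show "Q i"
      by (cases i) simp_all
  qed simp
  define e where "e = S.prob (B 0)"
  define p where "p = prob {x\<in>space M. P x}"
  have "emeasure (stream_space M) (B 0) = emeasure M {x\<in>space M. \<not> P x} * emeasure (stream_space M) (B 0)"
  proof (rule emeasure_stream_space_Stream_split[OF _ _ _ B_streams])
    fix t \<omega> assume "t \<in> space M" "\<omega> \<in> streams (space M)"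
    then show "t ## \<omega> \<in> B 0 \<longleftrightarrow> t \<in> {x\<in>space M. \<not> P x} \<and> \<omega> \<in> B 0"
      using all_nat[of "\<lambda>i. \<not> P ((t ## \<omega>) !! i)"] by (simp add: B_def space_stream_space streams_Stream)
  qed simp_all
  moreover have "emeasure M {x\<in>space M. \<not> P x} = ennreal (1 - p)"
  proof -
    have "{x\<in>space M. \<not> P x} = space M - {x\<in>space M. P x}"
      by blast
    then show ?thesis
      using prob_compl[of "{x\<in>space M. P x}"] by (simp add: p_def emeasure_eq_measure)
  qed
  ultimately have "ennreal e = ennreal (1 - p) * ennreal e"
    by (simp add: e_def S.emeasure_eq_measure)
  then have "e = (1 - p) * e"
    by (simp add: e_def p_def ennreal_mult[symmetric])
  moreover have "0 < p"
    using pos by (simp add: p_def emeasure_eq_measure zero_less_measure_iff)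
  ultimately have null_B0: "emeasure (stream_space M) (B 0) = 0"
    by (simp add: e_def S.emeasure_eq_measure algebra_simps)
  have null_B: "emeasure (stream_space M) (B m) = 0" for m
  proof (induction m)
    case 0
    show ?case
      by (rule null_B0)
  next
    case (Suc m)
    have "emeasure (stream_space M) (B (Suc m)) = emeasure M (space M) * emeasure (stream_space M) (B m)"
    proof (rule emeasure_stream_space_Stream_split[OF _ _ _ B_streams])
      fix t \<omega> assume "t \<in> space M" "\<omega> \<in> streams (space M)"
      then show "t ## \<omega> \<in> B (Suc m) \<longleftrightarrow> t \<in> space M \<and> \<omega> \<in> B m"
        using all_from_Suc[of m "\<lambda>i. \<not> P ((t ## \<omega>) !! i)"]
        by (simp add: B_def space_stream_space streams_Stream)
    qed simp_all
    then show ?case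
      using Suc.IH by simp
  qed
  have "(\<Union>m. B m) \<in> null_sets (stream_space M)"
    using null_B by (intro null_sets_UN) (auto simp: null_sets_def)
  moreover have "{\<omega>\<in>space (stream_space M). \<not> infinite {j. P (\<omega> !! j)}} \<subseteq> (\<Union>m. B m)"
  proof (rule subsetI)
    fix \<omega> assume "\<omega> \<in> {\<omega>\<in>space (stream_space M). \<not> infinite {j. P (\<omega> !! j)}}"
    then have "\<omega> \<in> space (stream_space M)" "finite {j. P (\<omega> !! j)}"
      by auto
    then obtain m where "\<forall>j\<in>{j. P (\<omega> !! j)}. j < m"
      using finite_nat_bounded by blast
    with \<open>\<omega> \<in> space (stream_space M)\<close> have "\<omega> \<in> B m"
      by (auto simp: B_def not_le[symmetric])
    then show "\<omega> \<in> (\<Union>m. B m)"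
      by blast
  qed
  ultimately show ?thesis
    by (rule AE_I')
qed

lemma (in prob_space) emeasure_stream_space_scylinder:
  assumes "As \<in> lists (sets M)"
  shows "emeasure (stream_space M) (scylinder (space M) As) = prod_list (map (emeasure M) As)"
  using assms
proof (induction As)
  case Nil
  interpret S: prob_space "stream_space M"
    by (rule prob_space_stream_space)
  show ?case
    using S.emeasure_space_1 by (simp add: space_stream_space)
next
  case (Cons A As)
  then have "emeasure (stream_space M) (scylinder (space M) (A # As)) =
      emeasure M A * emeasure (stream_space M) (scylinder (space M) As)"
    using scylinder_streams[of "space M" As]
    by (intro emeasure_stream_space_Stream_split sets_scylinder) (auto simp: streams_Stream)
  then show ?case
    using Cons by simp
qed

lemma sets_stream_space_scylinder:
  "sets (stream_space M) = sigma_sets (streams (space M)) (scylinder (space M) ` lists (sets M))"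
proof -
  let ?G = "scylinder (space M) ` lists (sets M)"
  have G_Pow: "?G \<subseteq> Pow (streams (space M))"
    using scylinder_streams by auto
  have "sets (stream_space M) = sets (sigma (streams (space M)) ?G)"
  proof (rule antisym)
    let ?V = "\<lambda>i. vimage_algebra (streams (space M)) (\<lambda>\<omega>. \<omega> !! i) M"
    show "sets (stream_space M) \<subseteq> sets (sigma (streams (space M)) ?G)"
      unfolding sets_stream_space_eq
    proof (safe intro!: sets_Sup_in_sets del: subsetI equalityI)
      fix i :: nat
      show "space (?V i) = space (sigma (streams (space M)) ?G)"
        using scylinder_streams by (subst space_measure_of) auto
      have sets_M: "sets M = sets (sigma (space M) (sets M))"
        by (simp add: sets.sigma_sets_eq sets.space_closed)
      have "(\<lambda>\<omega>. \<omega> !! i) -` A \<inter> streams (space M) \<in> sets (sigma (streams (space M)) ?G)"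
        if "A \<in> sets M" for A
      proof -
        have "scylinder (space M) (replicate i (space M) @ [A]) = (\<lambda>\<omega>. \<omega> !! i) -` A \<inter> streams (space M)"
          using that by (induction i) (auto simp: streams_shd streams_stl cong: conj_cong)
        moreover have "scylinder (space M) (replicate i (space M) @ [A]) \<in> sets (sigma (streams (space M)) ?G)"
          using that by (intro in_measure_of[OF G_Pow] imageI) auto
        ultimately show ?thesis
          by simp
      qed
      then show "sets (?V i) \<subseteq> sets (sigma (streams (space M)) ?G)"
        apply (subst vimage_algebra_cong[OF refl refl sets_M])
        apply (subst vimage_algebra_sigma[OF sets.space_closed])
         apply (simp add: streams_iff_snth)
        apply (subst sigma_le_sets)
         apply auto
        done
    qed
    show "sets (sigma (streams (space M)) ?G) \<subseteq> sets (stream_space M)"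
      unfolding sigma_le_sets[OF G_Pow] by (auto intro!: sets_scylinder)
  qed
  then show ?thesis
    using G_Pow by simp
qed

lemma Int_stable_scylinder:
  assumes "Int_stable A"
  shows "Int_stable (scylinder S ` lists A)"
proof (rule Int_stableI_image)
  fix xs ys assume "xs \<in> lists A" "ys \<in> lists A"
  then show "\<exists>zs\<in>lists A. scylinder S xs \<inter> scylinder S ys = scylinder S zs"
  proof (induction xs arbitrary: ys)
    case Nil
    then show ?case
      by (auto simp: Int_absorb1 scylinder_streams)
  next
    case xs: (Cons x xs)
    show ?case
    proof (cases ys)
      case Nil
      with xs.hyps show ?thesis
        by (auto simp: Int_absorb2 scylinder_streams intro!: bexI[of _ "x # xs"])
    next
      case ys: (Cons y ys')
      with xs.IH[of ys'] xs.prems obtain zs where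
        zs: "zs \<in> lists A" "scylinder S xs \<inter> scylinder S ys' = scylinder S zs"
        by auto
      have "x \<inter> y \<in> A"
        using xs.hyps xs.prems ys assms by (auto simp: Int_stable_def)
      with zs show ?thesis
        by (intro bexI[of _ "(x \<inter> y) # zs"]) (auto simp: ys)
    qed
  qed
qed

lemma extend_measure_eq_null:
  assumes "i \<in> I" "G i = {}" "\<mu> i \<noteq> 0"
  shows "extend_measure \<Omega> I G \<mu> = measure_of \<Omega> (G ` I) (\<lambda>_. 0)"
proof -
  have no_extension: "\<not> (\<exists>\<mu>'. (\<forall>i\<in>I. \<mu>' (G i) = \<mu> i) \<and> measure_space \<Omega> (sigma_sets \<Omega> (G ` I)) \<mu>')"
  proof
    assume "\<exists>\<mu>'. (\<forall>i\<in>I. \<mu>' (G i) = \<mu> i) \<and> measure_space \<Omega> (sigma_sets \<Omega> (G ` I)) \<mu>'"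
    then obtain \<mu>' where "\<forall>i\<in>I. \<mu>' (G i) = \<mu> i" "measure_space \<Omega> (sigma_sets \<Omega> (G ` I)) \<mu>'"
      by blast
    then have "\<mu>' {} = 0" "\<mu>' {} = \<mu> i"
      using assms by (auto simp: measure_space_def positive_def)
    then show False
      using assms(3) by simp
  qed
  then have "\<not> ((\<exists>\<mu>'. (\<forall>i\<in>I. \<mu>' (G i) = \<mu> i) \<and> measure_space \<Omega> (sigma_sets \<Omega> (G ` I)) \<mu>') \<and>
      \<not> (\<forall>i\<in>I. \<mu> i = 0))"
    by blast
  then show ?thesis
    unfolding extend_measure_def by (simp only: if_False)
qed

text \<open>The premeasure of an infinite product multiplies over an infinite index set, which gives 1
  by convention; so it assigns mass 1 to the empty cylinder, no measure extends it, and the product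
  of null measures defaults to the null measure.\<close>

lemma emeasure_PiM_nat_null_measure: "emeasure (\<Pi>\<^sub>M i\<in>(UNIV :: nat set). null_measure M) X = 0"
  unfolding PiM_def
  by (subst extend_measure_eq_null[where i = "({0}, \<lambda>_. {})"]) (auto simp: prod_emb_def emeasure_sigma prod.infinite)

lemma stream_space_null_measure: "stream_space (null_measure M) = null_measure (stream_space M)"
proof (rule measure_eqI)
  show "sets (stream_space (null_measure M)) = sets (null_measure (stream_space M))"
    unfolding sets_null_measure by (rule sets_stream_space_cong) simp
  fix X assume X: "X \<in> sets (stream_space (null_measure M))"
  have "emeasure (stream_space (null_measure M)) X =
      emeasure (distr (\<Pi>\<^sub>M i\<in>UNIV. null_measure M) (stream_space (null_measure M)) to_stream) X"
    by (rule arg_cong[where f = "\<lambda>N. emeasure N X"], rule stream_space_eq_distr)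
  also have "\<dots> = emeasure (\<Pi>\<^sub>M i\<in>UNIV. null_measure M) (to_stream -` X \<inter> space (\<Pi>\<^sub>M i\<in>UNIV. null_measure M))"
    by (rule emeasure_distr[OF measurable_to_stream X])
  also have "\<dots> = 0"
    by (rule emeasure_PiM_nat_null_measure)
  finally show "emeasure (stream_space (null_measure M)) X = emeasure (null_measure (stream_space M)) X"
    by (simp only: emeasure_null_measure)
qed

lemma measurable_stream_space_kernel:
  assumes K: "K \<in> X \<rightarrow>\<^sub>M subprob_algebra M"
    and prob_or_null: "\<And>x. x \<in> space X \<Longrightarrow> prob_space (K x) \<or> K x = null_measure M"
  shows "(\<lambda>x. stream_space (K x)) \<in> X \<rightarrow>\<^sub>M subprob_algebra (stream_space M)"
proof -
  have sets_K: "sets (K x) = sets M" if "x \<in> space X" for x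
    using K that by (rule subprob_measurableD)
  have emeasure_K: "(\<lambda>x. emeasure (K x) A) \<in> borel_measurable X" if "A \<in> sets M" for A
    by (rule measurable_compose[OF K measurable_emeasure_subprob_algebra[OF that]])
  have cylinder: "emeasure (stream_space (K x)) (scylinder (space M) As) =
      emeasure (K x) (space M) * prod_list (map (emeasure (K x)) As)"
    if x: "x \<in> space X" and As: "As \<in> lists (sets M)" for x As
    using prob_or_null[OF x]
  proof (elim disjE)
    assume prob: "prob_space (K x)"
    show ?thesis
      using prob_space.emeasure_stream_space_scylinder[OF prob, of As] As prob_space.emeasure_space_1[OF prob]
      by (simp add: sets_K[OF x] sets_eq_imp_space_eq[OF sets_K[OF x]])
  qed (simp add: stream_space_null_measure)
  have cylinder_measurable: "(\<lambda>x. emeasure (stream_space (K x)) (scylinder (space M) As)) \<in> borel_measurable X"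
    if "As \<in> lists (sets M)" for As
  proof -
    have "(\<lambda>x. prod_list (map (emeasure (K x)) As)) \<in> borel_measurable X"
      using that
    proof (induction As)
      case (Cons A As)
      then show ?case
        unfolding list.map prod_list.Cons by (intro borel_measurable_times_ennreal emeasure_K) simp_all
    qed simp
    then have "(\<lambda>x. emeasure (K x) (space M) * prod_list (map (emeasure (K x)) As)) \<in> borel_measurable X"
      by (rule borel_measurable_times_ennreal[OF emeasure_K[OF sets.top]])
    then show ?thesis
      by (rule measurable_cong[THEN iffD1, rotated]) (simp add: cylinder that)
  qed
  have stream_space_K: "subprob_space (stream_space (K x))" if x: "x \<in> space X" for x
  proof -
    obtain y where "y \<in> space M"
      using subprob_space.subprob_not_empty[OF subprob_space_kernel[OF K x]]
        sets_eq_imp_space_eq[OF sets_K[OF x]] by auto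
    then have "sconst y \<in> space (stream_space M)"
      by (simp add: space_stream_space sconst_streams)
    then have nonempty: "space (stream_space M) \<noteq> {}"
      by blast
    from prob_or_null[OF x] show ?thesis
    proof (elim disjE)
      assume "prob_space (K x)"
      then show ?thesis
        by (intro prob_space_imp_subprob_space prob_space.prob_space_stream_space)
    next
      assume "K x = null_measure M"
      with nonempty show ?thesis
        by (simp add: stream_space_null_measure subprob_space_null_measure)
    qed
  qed
  show ?thesis
  proof (rule measurable_subprob_algebra_generated[OF sets_stream_space_scylinder])
    show "Int_stable (scylinder (space M) ` lists (sets M))"
      by (intro Int_stable_scylinder Int_stableI) auto
    show "scylinder (space M) ` lists (sets M) \<subseteq> Pow (streams (space M))"
      using scylinder_streams by auto
    show "sets (stream_space (K x)) = sets (stream_space M)" if "x \<in> space X" for x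
      using sets_K[OF that] by (rule sets_stream_space_cong)
    show "(\<lambda>x. emeasure (stream_space (K x)) A) \<in> borel_measurable X"
      if "A \<in> scylinder (space M) ` lists (sets M)" for A
      using that cylinder_measurable by blast
    show "(\<lambda>x. emeasure (stream_space (K x)) (streams (space M))) \<in> borel_measurable X"
      using cylinder_measurable[of "[]"] by simp
  qed (rule stream_space_K)
qed

lemma measure_of_mixture_eq_bind:
  fixes c :: "'i \<Rightarrow> ennreal"
  assumes I: "finite I" "I \<noteq> {}" and K: "\<And>i. i \<in> I \<Longrightarrow> K i \<in> space (subprob_algebra M)"
  shows "measure_of (space M) (sets M) (\<lambda>A. \<Sum>i\<in>I. c i * emeasure (K i) A) = density (count_space I) c \<bind> K"
proof -
  let ?D = "density (count_space I) c \<bind> K"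
  have K_measurable: "K \<in> density (count_space I) c \<rightarrow>\<^sub>M subprob_algebra M"
    using K by (simp add: measurable_cong_sets[OF sets_density refl])
  have sets_D: "sets ?D = sets M"
    using K I(2) by (intro sets_bind) (auto simp: space_subprob_algebra)
  have "measure_of (space M) (sets M) (\<lambda>A. \<Sum>i\<in>I. c i * emeasure (K i) A) =
      measure_of (space M) (sets M) (emeasure ?D)"
  proof (rule measure_of_eq[OF sets.space_closed])
    fix A assume "A \<in> sigma_sets (space M) (sets M)"
    then have A: "A \<in> sets M"
      by (simp add: sets.sigma_sets_eq)
    show "(\<Sum>i\<in>I. c i * emeasure (K i) A) = emeasure ?D A"
      using I A by (simp add: emeasure_bind[OF _ K_measurable] nn_integral_density
          nn_integral_count_space_finite mult.commute)
  qed
  also have "\<dots> = ?D"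
    using sets_D sets_eq_imp_space_eq[OF sets_D] measure_of_of_measure[of ?D] by simp
  finally show ?thesis .
qed

lemma nn_integral_measure_of_mixture:
  fixes c :: "'i \<Rightarrow> ennreal"
  assumes I: "finite I" "I \<noteq> {}" and K: "\<And>i. i \<in> I \<Longrightarrow> K i \<in> space (subprob_algebra M)"
    and h: "h \<in> borel_measurable M"
  shows "(\<integral>\<^sup>+x. h x \<partial>measure_of (space M) (sets M) (\<lambda>A. \<Sum>i\<in>I. c i * emeasure (K i) A)) =
    (\<Sum>i\<in>I. c i * (\<integral>\<^sup>+x. h x \<partial>K i))"
proof -
  have K_measurable: "K \<in> density (count_space I) c \<rightarrow>\<^sub>M subprob_algebra M"
    using K by (simp add: measurable_cong_sets[OF sets_density refl])
  show ?thesis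
    using I by (simp add: measure_of_mixture_eq_bind[OF I K] nn_integral_bind[OF h K_measurable]
        nn_integral_density nn_integral_count_space_finite)
qed

text \<open>The series has at most one nonzero term, namely at the index \<open>m\<close> of the \<open>(N+1)\<close>-th success
  (so \<open>m = P\<^sub>t - 1\<close> in the notation of the algorithm); in this form it is evidently measurable.\<close>

definition alive_estimate :: "('a \<Rightarrow> bool) \<Rightarrow> ('a \<Rightarrow> ennreal) \<Rightarrow> nat \<Rightarrow> 'a stream \<Rightarrow> ennreal" where
  "alive_estimate S \<phi> N \<omega> = (\<Sum>m. if S (\<omega> !! m) \<and> count_below (\<lambda>j. S (\<omega> !! j)) m = N
     then (\<Sum>j<m. if S (\<omega> !! j) then \<phi> (\<omega> !! j) else 0) * ennreal (1 / real m) else 0)"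

lemma measurable_alive_estimate [measurable]:
  assumes [measurable]: "Measurable.pred M S" "\<phi> \<in> borel_measurable M"
  shows "alive_estimate S \<phi> N \<in> borel_measurable (stream_space M)"
  unfolding alive_estimate_def by measurable

lemma alive_estimate_eq_0:
  assumes "\<not> (infinite {j. S (\<omega> !! j)} \<or> N < card {j. S (\<omega> !! j)})"
  shows "alive_estimate S \<phi> N \<omega> = 0"
proof -
  have no_term: "\<not> (S (\<omega> !! m) \<and> count_below (\<lambda>j. S (\<omega> !! j)) m = N)" for m
    using assms ex_count_below_eq_iff[of "\<lambda>j. S (\<omega> !! j)" N] by blast
  have "alive_estimate S \<phi> N \<omega> = (\<Sum>m. 0)"
    unfolding alive_estimate_def by (simp only: if_not_P[OF no_term])
  then show ?thesis
    by simp
qed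

lemma alive_estimate_eq:
  assumes succ: "infinite {j. S (\<omega> !! j)} \<or> N < card {j. S (\<omega> !! j)}"
  defines "e \<equiv> enumerate {j. S (\<omega> !! j)}"
  shows "alive_estimate S \<phi> N \<omega> = (\<Sum>n<N. \<phi> (\<omega> !! e n)) * ennreal (1 / real (e N))"
proof -
  let ?P = "\<lambda>j. S (\<omega> !! j)"
  let ?\<psi> = "\<lambda>m. (\<Sum>j<m. if ?P j then \<phi> (\<omega> !! j) else 0) * ennreal (1 / real m)"
  have e_N: "?P (e N)" "count_below ?P (e N) = N"
    using count_below_enumerate[OF succ] by (simp_all add: e_def)
  have single: "(\<lambda>m. if ?P m \<and> count_below ?P m = N then ?\<psi> m else 0) = (\<lambda>m. if m = e N then ?\<psi> (e N) else 0)"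
  proof (intro ext)
    fix m
    show "(if ?P m \<and> count_below ?P m = N then ?\<psi> m else 0) = (if m = e N then ?\<psi> (e N) else 0)"
      using e_N count_below_inj[of ?P m "e N"] by (cases "m = e N") auto
  qed
  have "(\<lambda>m. if ?P m \<and> count_below ?P m = N then ?\<psi> m else 0) sums ?\<psi> (e N)"
    unfolding single by (rule sums_single)
  then have "alive_estimate S \<phi> N \<omega> = ?\<psi> (e N)"
    unfolding alive_estimate_def by (rule sums_unique[symmetric])
  also have "(\<Sum>j<e N. if ?P j then \<phi> (\<omega> !! j) else 0) = (\<Sum>j\<in>{j\<in>{..<e N}. ?P j}. \<phi> (\<omega> !! j))"
    by (rule sum.inter_filter[symmetric]) simp
  also have "{j\<in>{..<e N}. ?P j} = e ` {..<N}"
    using enumerate_elements_below[OF succ] by (auto simp: e_def)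
  also have "(\<Sum>j\<in>e ` {..<N}. \<phi> (\<omega> !! j)) = (\<Sum>n<N. \<phi> (\<omega> !! e n))"
    using inj_on_enumerate_lessThan[OF succ] by (simp add: sum.reindex e_def)
  finally show ?thesis .
qed

text \<open>A success at position \<open>j < m\<close> while the \<open>(N+1)\<close>-th success is at \<open>m\<close> amounts to an independent
  success \<open>x\<close> inserted at \<open>j\<close> into a stream whose \<open>N\<close>-th success is at \<open>m - 1\<close>; summing over the
  \<open>m\<close> possible positions \<open>j\<close> cancels the factor \<open>1 / m\<close>.\<close>

lemma (in prob_space) nn_integral_alive_estimate_term:
  assumes [measurable]: "Measurable.pred M S" "\<phi> \<in> borel_measurable M" and N: "0 < N"
  shows "(\<integral>\<^sup>+\<omega>. (if S (\<omega> !! m) \<and> count_below (\<lambda>j. S (\<omega> !! j)) m = N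
        then (\<Sum>j<m. if S (\<omega> !! j) then \<phi> (\<omega> !! j) else 0) * ennreal (1 / real m) else 0) \<partial>stream_space M) =
    (\<integral>\<^sup>+x. (if S x then \<phi> x else 0) \<partial>M) *
    (\<integral>\<^sup>+\<omega>. (if 0 < m \<and> S (\<omega> !! (m - 1)) \<and> count_below (\<lambda>j. S (\<omega> !! j)) (m - 1) = N - 1
        then 1 else 0) \<partial>stream_space M)"
    (is "_ = ?A * (\<integral>\<^sup>+\<omega>. ?H \<omega> \<partial>stream_space M)")
proof -
  interpret S: prob_space "stream_space M"
    by (rule prob_space_stream_space)
  define G where "G j \<omega> = (if S (\<omega> !! m) \<and> count_below (\<lambda>j. S (\<omega> !! j)) m = N \<and> S (\<omega> !! j)
    then \<phi> (\<omega> !! j) else 0)" for j \<omega>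
  have G_measurable [measurable]: "G j \<in> borel_measurable (stream_space M)" for j
    unfolding G_def by measurable
  have G_insert: "G j (sinsert j x \<omega>) = (if S x then \<phi> x else 0) * ?H \<omega>" if "j < m" for j x \<omega>
    using that N count_below_sinsert[OF that, of S x \<omega>] by (auto simp: G_def snth_sinsert)
  have nn_integral_G: "(\<integral>\<^sup>+\<omega>. G j \<omega> \<partial>stream_space M) = ?A * (\<integral>\<^sup>+\<omega>. ?H \<omega> \<partial>stream_space M)"
    if "j < m" for j
  proof -
    have "(\<integral>\<^sup>+\<omega>. G j \<omega> \<partial>stream_space M) = (\<integral>\<^sup>+x. \<integral>\<^sup>+\<omega>. G j (sinsert j x \<omega>) \<partial>stream_space M \<partial>M)"
      by (rule nn_integral_stream_space_sinsert) simp
    also have "\<dots> = (\<integral>\<^sup>+x. (if S x then \<phi> x else 0) * (\<integral>\<^sup>+\<omega>. ?H \<omega> \<partial>stream_space M) \<partial>M)"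
      by (simp add: G_insert[OF that] nn_integral_cmult)
    also have "\<dots> = ?A * (\<integral>\<^sup>+\<omega>. ?H \<omega> \<partial>stream_space M)"
      by (rule nn_integral_multc) measurable
    finally show ?thesis .
  qed
  show ?thesis
  proof (cases "m = 0")
    case True
    with N show ?thesis
      by simp
  next
    case False
    have "(\<integral>\<^sup>+\<omega>. (if S (\<omega> !! m) \<and> count_below (\<lambda>j. S (\<omega> !! j)) m = N
          then (\<Sum>j<m. if S (\<omega> !! j) then \<phi> (\<omega> !! j) else 0) * ennreal (1 / real m) else 0) \<partial>stream_space M) =
        (\<integral>\<^sup>+\<omega>. (\<Sum>j<m. G j \<omega>) * ennreal (1 / real m) \<partial>stream_space M)"
      by (intro nn_integral_cong) (auto simp: G_def intro!: sum.neutral)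
    also have "\<dots> = (\<Sum>j<m. \<integral>\<^sup>+\<omega>. G j \<omega> \<partial>stream_space M) * ennreal (1 / real m)"
      by (subst nn_integral_multc) (auto simp: nn_integral_sum)
    also have "\<dots> = (of_nat m * ennreal (1 / real m)) * (?A * (\<integral>\<^sup>+\<omega>. ?H \<omega> \<partial>stream_space M))"
      using False by (simp add: nn_integral_G ac_simps)
    also have "of_nat m * ennreal (1 / real m) = 1"
      using False by (simp add: ennreal_of_nat_eq_real_of_nat ennreal_mult[symmetric] del: ennreal_1)
    finally show ?thesis
      by simp
  qed
qed

lemma (in prob_space) nn_integral_alive_estimate:
  assumes [measurable]: "Measurable.pred M S" "\<phi> \<in> borel_measurable M" and N: "0 < N"
  shows "(\<integral>\<^sup>+\<omega>. alive_estimate S \<phi> N \<omega> \<partial>stream_space M) = (\<integral>\<^sup>+x. (if S x then \<phi> x else 0) \<partial>M)"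
    (is "_ = ?A")
proof -
  interpret S: prob_space "stream_space M"
    by (rule prob_space_stream_space)
  define H where "H m \<omega> = (if 0 < m \<and> S (\<omega> !! (m - 1)) \<and> count_below (\<lambda>j. S (\<omega> !! j)) (m - 1) = N - 1
    then 1 else 0 :: ennreal)" for m \<omega>
  have H_measurable [measurable]: "H m \<in> borel_measurable (stream_space M)" for m
    unfolding H_def by measurable
  have "(\<integral>\<^sup>+\<omega>. alive_estimate S \<phi> N \<omega> \<partial>stream_space M) =
      (\<Sum>m. \<integral>\<^sup>+\<omega>. (if S (\<omega> !! m) \<and> count_below (\<lambda>j. S (\<omega> !! j)) m = N
        then (\<Sum>j<m. if S (\<omega> !! j) then \<phi> (\<omega> !! j) else 0) * ennreal (1 / real m) else 0) \<partial>stream_space M)"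
    unfolding alive_estimate_def by (rule nn_integral_suminf) measurable
  also have "\<dots> = (\<Sum>m. ?A * (\<integral>\<^sup>+\<omega>. H m \<omega> \<partial>stream_space M))"
    unfolding H_def by (simp only: nn_integral_alive_estimate_term[OF assms])
  also have "\<dots> = ?A * (\<integral>\<^sup>+\<omega>. (\<Sum>m. H m \<omega>) \<partial>stream_space M)"
    by (simp only: ennreal_suminf_cmult nn_integral_suminf[OF H_measurable])
  also have "\<dots> = ?A"
  proof (cases "emeasure M {x\<in>space M. S x} = 0")
    case True
    then have "AE x in M. \<not> S x"
      by (intro AE_I'[of "{x\<in>space M. S x}"]) (auto simp: null_sets_def)
    then have "?A = 0"
      by (subst nn_integral_0_iff_AE) (auto elim!: eventually_mono)
    then show ?thesis
      by simp
  next
    case False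
    \<comment> \<open>Almost surely there are infinitely many successes, so exactly one \<open>H m\<close> is 1.\<close>
    have "AE \<omega> in stream_space M. (\<Sum>m. H m \<omega>) = 1"
      using AE_stream_space_infinitely_often[OF _ False]
    proof (rule eventually_mono)
      fix \<omega> assume "infinite {j. S (\<omega> !! j)}"
      then obtain k where k: "S (\<omega> !! k)" "count_below (\<lambda>j. S (\<omega> !! j)) k = N - 1"
        using ex_count_below_eq_iff[of "\<lambda>j. S (\<omega> !! j)" "N - 1"] by blast
      have "H m \<omega> = (if m = Suc k then 1 else 0)" for m
      proof (cases "0 < m \<and> S (\<omega> !! (m - 1)) \<and> count_below (\<lambda>j. S (\<omega> !! j)) (m - 1) = N - 1")
        case True
        then have "m - 1 = k"
          using k count_below_inj[of "\<lambda>j. S (\<omega> !! j)" "m - 1" k] by simp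
        with True show ?thesis
          by (auto simp: H_def)
      next
        case False
        then have "m \<noteq> Suc k"
          using k by auto
        with False show ?thesis
          by (simp add: H_def)
      qed
      then show "(\<Sum>m. H m \<omega>) = 1"
        using sums_unique[OF sums_single[of "Suc k" "\<lambda>_. 1 :: ennreal"]] by simp
    qed simp
    then have "(\<integral>\<^sup>+\<omega>. (\<Sum>m. H m \<omega>) \<partial>stream_space M) = (\<integral>\<^sup>+\<omega>. 1 \<partial>stream_space M)"
      by (rule nn_integral_cong_AE)
    then have "(\<integral>\<^sup>+\<omega>. (\<Sum>m. H m \<omega>) \<partial>stream_space M) = 1"
      by (simp add: S.emeasure_space_1)
    then show ?thesis
      by simp
  qed
  finally show ?thesis .
qed

lemma sets_apf_Q [simp]: "sets (apf_Q M f g N t xs) = sets M"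
  by (simp add: apf_Q_def sets.space_closed)

lemma space_apf_Q [simp]: "space (apf_Q M f g N t xs) = space M"
  by (simp add: apf_Q_def sets.space_closed)

lemma apf_Q_eq_null_measure:
  assumes "(\<Sum>l<N. apf_w g t xs l) = 0"
  shows "apf_Q M f g N t xs = null_measure M"
  using assms by (simp add: apf_Q_def null_measure_def)

lemma nn_integral_PiM_component:
  assumes p: "prob_space p" and m: "m \<in> I" and h: "h \<in> borel_measurable p"
  shows "(\<integral>\<^sup>+xs. h (xs m) \<partial>(\<Pi>\<^sub>M i\<in>I. p)) = (\<integral>\<^sup>+x. h x \<partial>p)"
proof -
  have component: "(\<lambda>xs. xs m) \<in> (\<Pi>\<^sub>M i\<in>I. p) \<rightarrow>\<^sub>M p"
    using m by (rule measurable_component_singleton)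
  have "(\<integral>\<^sup>+xs. h (xs m) \<partial>(\<Pi>\<^sub>M i\<in>I. p)) = (\<integral>\<^sup>+x. h x \<partial>distr (\<Pi>\<^sub>M i\<in>I. p) p (\<lambda>xs. xs m))"
    by (rule nn_integral_distr[symmetric, OF component]) (simp add: h)
  also have "distr (\<Pi>\<^sub>M i\<in>I. p) p (\<lambda>xs. xs m) = p"
    using p m by (rule distr_PiM_component)
  finally show ?thesis .
qed

lemma apf_step_fn_fail:
  assumes "\<not> (infinite {k. 0 < g t (\<omega> !! k)} \<or> N < card {k. 0 < g t (\<omega> !! k)})"
  shows "apf_step_fn g N t xs Z \<omega> = (xs, 0)"
  using assms by (simp add: apf_step_fn_def)

lemma apf_step_fn_success:
  assumes "infinite {k. 0 < g t (\<omega> !! k)} \<or> N < card {k. 0 < g t (\<omega> !! k)}"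
  defines "e \<equiv> enumerate {k. 0 < g t (\<omega> !! k)}"
  shows "apf_step_fn g N t xs Z \<omega> =
    (restrict (\<lambda>n. \<omega> !! e n) {..<N}, Z * ((\<Sum>n<N. g t (\<omega> !! e n)) / real (e N)))"
  using assms by (auto simp: apf_step_fn_def e_def Let_def not_le intro!: sum.cong)

lemma apf_step_fn_eq_Least:
  fixes g :: "nat \<Rightarrow> 'a \<Rightarrow> real" and t :: nat
  defines "P \<equiv> \<lambda>\<omega> j. 0 < g t (\<omega> !! j)"
  defines "e \<equiv> \<lambda>\<omega> n. LEAST m. P \<omega> m \<and> count_below (P \<omega>) m = n"
  shows "apf_step_fn g N t xs Z \<omega> =
    (if \<exists>m. P \<omega> m \<and> count_below (P \<omega>) m = N
     then (restrict (\<lambda>n. \<omega> !! e \<omega> n) {..<N}, Z * ((\<Sum>n<N. g t (\<omega> !! e \<omega> n)) / real (e \<omega> N)))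
     else (xs, 0))"
proof (cases "\<exists>m. P \<omega> m \<and> count_below (P \<omega>) m = N")
  case True
  then have succ: "infinite {k. P \<omega> k} \<or> n < card {k. P \<omega> k}" if "n \<le> N" for n
    using that ex_count_below_eq_iff[of "P \<omega>" N] by auto
  have enum: "enumerate {k. P \<omega> k} n = e \<omega> n" if "n \<le> N" for n
    unfolding e_def by (rule enumerate_eq_Least[OF succ[OF that]])
  have "restrict (\<lambda>n. \<omega> !! enumerate {k. P \<omega> k} n) {..<N} = restrict (\<lambda>n. \<omega> !! e \<omega> n) {..<N}"
    using enum by (intro restrict_ext) simp
  moreover have "(\<Sum>n<N. g t (\<omega> !! enumerate {k. P \<omega> k} n)) = (\<Sum>n<N. g t (\<omega> !! e \<omega> n))"
    using enum by (intro sum.cong) simp_all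
  ultimately show ?thesis
    using True apf_step_fn_success[of g t \<omega> N xs Z] succ[of N] enum[of N] by (simp add: P_def)
next
  case False
  then have "\<not> (infinite {k. 0 < g t (\<omega> !! k)} \<or> N < card {k. 0 < g t (\<omega> !! k)})"
    using ex_count_below_eq_iff[of "P \<omega>" N] unfolding P_def by blast
  then show ?thesis
    unfolding if_not_P[OF False] by (rule apf_step_fn_fail)
qed

locale alive_particle_filter =
  fixes M :: "'a measure" and p0 :: "'a measure" and f :: "nat \<Rightarrow> 'a \<Rightarrow> 'a measure"
    and g :: "nat \<Rightarrow> 'a \<Rightarrow> real" and N T :: nat
  assumes N_pos: "0 < N" and prob_space_p0: "prob_space p0" and sets_p0: "sets p0 = sets M"
    and f_kernel: "\<And>t. t \<in> {1..T} \<Longrightarrow> f t \<in> M \<rightarrow>\<^sub>M prob_algebra M"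
    and g_measurable: "\<And>t. t \<in> {1..T} \<Longrightarrow> g t \<in> borel_measurable M"
    and g_nonneg: "\<And>t x. t \<in> {1..T} \<Longrightarrow> x \<in> space M \<Longrightarrow> 0 \<le> g t x"
begin

definition total_weight :: "nat \<Rightarrow> (nat \<Rightarrow> 'a) \<Rightarrow> real" where
  "total_weight t xs = (\<Sum>l<N. apf_w g t xs l)"

lemma f_subprob_kernel: "t \<in> {1..T} \<Longrightarrow> f t \<in> M \<rightarrow>\<^sub>M subprob_algebra M"
  using f_kernel by (rule measurable_prob_algebraD)

lemma space_M_not_empty: "space M \<noteq> {}"
  using prob_space.not_empty[OF prob_space_p0] sets_eq_imp_space_eq[OF sets_p0] by simp

lemma particle_in_space:
  assumes "xs \<in> space (\<Pi>\<^sub>M i\<in>{..<N}. M)" "m < N"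
  shows "xs m \<in> space M"
  using PiE_mem[OF assms(1)[unfolded space_PiM]] assms(2) by simp

lemma apf_w_nonneg:
  assumes "t \<in> {1..T}" "xs \<in> space (\<Pi>\<^sub>M i\<in>{..<N}. M)" "m < N"
  shows "0 \<le> apf_w g t xs m"
proof (cases "t = 1")
  case False
  with assms(1) have "t - 1 \<in> {1..T}"
    by auto
  with False show ?thesis
    using g_nonneg particle_in_space[OF assms(2,3)] by (simp add: apf_w_def)
qed (simp add: apf_w_def)

lemma total_weight_nonneg:
  "t \<in> {1..T} \<Longrightarrow> xs \<in> space (\<Pi>\<^sub>M i\<in>{..<N}. M) \<Longrightarrow> 0 \<le> total_weight t xs"
  unfolding total_weight_def by (auto intro!: sum_nonneg apf_w_nonneg)

lemma nn_integral_apf_Q: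
  assumes t: "t \<in> {1..T}" and xs: "xs \<in> space (\<Pi>\<^sub>M i\<in>{..<N}. M)" and h: "h \<in> borel_measurable M"
  shows "(\<integral>\<^sup>+x. h x \<partial>apf_Q M f g N t xs) =
    (\<Sum>m<N. ennreal (apf_w g t xs m / total_weight t xs) * (\<integral>\<^sup>+x. h x \<partial>f t (xs m)))"
  unfolding apf_Q_def total_weight_def
proof (rule nn_integral_measure_of_mixture[OF _ _ _ h])
  show "f t (xs m) \<in> space (subprob_algebra M)" if "m \<in> {..<N}" for m
    using measurable_space[OF f_subprob_kernel[OF t]] that xs by (auto simp: space_PiM)
qed (use N_pos in auto)

lemma emeasure_apf_Q:
  assumes t: "t \<in> {1..T}" and xs: "xs \<in> space (\<Pi>\<^sub>M i\<in>{..<N}. M)" and A: "A \<in> sets M"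
  shows "emeasure (apf_Q M f g N t xs) A =
    (\<Sum>m<N. ennreal (apf_w g t xs m / total_weight t xs) * emeasure (f t (xs m)) A)"
proof -
  have "sets (f t (xs m)) = sets M" if "m < N" for m
    using measurable_space[OF f_kernel[OF t]] that xs by (auto simp: space_PiM space_prob_algebra)
  then show ?thesis
    using nn_integral_apf_Q[OF t xs borel_measurable_indicator[OF A]] A by simp
qed

lemma prob_space_apf_Q:
  assumes t: "t \<in> {1..T}" and xs: "xs \<in> space (\<Pi>\<^sub>M i\<in>{..<N}. M)" and W: "0 < total_weight t xs"
  shows "prob_space (apf_Q M f g N t xs)"
proof (rule prob_spaceI)
  have "emeasure (f t (xs m)) (space M) = 1" if "m < N" for m
  proof -
    have "prob_space (f t (xs m))" "sets (f t (xs m)) = sets M"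
      using measurable_space[OF f_kernel[OF t]] that xs by (auto simp: space_PiM space_prob_algebra)
    then show ?thesis
      using prob_space.emeasure_space_1 sets_eq_imp_space_eq by metis
  qed
  then have "emeasure (apf_Q M f g N t xs) (space M) = (\<Sum>m<N. ennreal (apf_w g t xs m / total_weight t xs))"
    by (simp add: emeasure_apf_Q[OF t xs])
  also have "\<dots> = ennreal (\<Sum>m<N. apf_w g t xs m / total_weight t xs)"
    using apf_w_nonneg[OF t xs] W by (intro sum_ennreal) auto
  also have "(\<Sum>m<N. apf_w g t xs m / total_weight t xs) = 1"
    using W by (simp add: sum_divide_distrib[symmetric] total_weight_def)
  finally show "emeasure (apf_Q M f g N t xs) (space (apf_Q M f g N t xs)) = 1"
    by simp
qed

lemma apf_Q_prob_or_null:
  assumes t: "t \<in> {1..T}" and xs: "xs \<in> space (\<Pi>\<^sub>M i\<in>{..<N}. M)"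
  shows "prob_space (apf_Q M f g N t xs) \<or> apf_Q M f g N t xs = null_measure M"
proof (cases "0 < total_weight t xs")
  case False
  then have "total_weight t xs = 0"
    using total_weight_nonneg[OF t xs] by simp
  then show ?thesis
    unfolding total_weight_def by (simp add: apf_Q_eq_null_measure)
qed (simp add: prob_space_apf_Q[OF t xs])

lemma measurable_particle: "m < N \<Longrightarrow> (\<lambda>s. fst s m) \<in> apf_SS M N \<rightarrow>\<^sub>M M"
  unfolding apf_SS_def by (rule measurable_compose[OF measurable_fst measurable_component_singleton]) auto

lemma measurable_apf_w: "t \<in> {1..T} \<Longrightarrow> m < N \<Longrightarrow> (\<lambda>s. apf_w g t (fst s) m) \<in> borel_measurable (apf_SS M N)"
  unfolding apf_w_def by (cases "t = 1") (auto intro!: measurable_compose[OF measurable_particle g_measurable])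

lemma measurable_total_weight: "t \<in> {1..T} \<Longrightarrow> (\<lambda>s. total_weight t (fst s)) \<in> borel_measurable (apf_SS M N)"
  unfolding total_weight_def by (intro borel_measurable_sum measurable_apf_w) auto

lemma space_apf_SS_fst: "s \<in> space (apf_SS M N) \<Longrightarrow> fst s \<in> space (\<Pi>\<^sub>M i\<in>{..<N}. M)"
  unfolding apf_SS_def by (auto simp: space_pair_measure)

lemma measurable_apf_Q:
  assumes t: "t \<in> {1..T}"
  shows "(\<lambda>s. apf_Q M f g N t (fst s)) \<in> apf_SS M N \<rightarrow>\<^sub>M subprob_algebra M"
proof (rule measurable_subprob_algebra)
  fix s assume "s \<in> space (apf_SS M N)"
  then have xs: "fst s \<in> space (\<Pi>\<^sub>M i\<in>{..<N}. M)"
    by (rule space_apf_SS_fst)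
  from apf_Q_prob_or_null[OF t xs] show "subprob_space (apf_Q M f g N t (fst s))"
  proof (elim disjE)
    assume "apf_Q M f g N t (fst s) = null_measure M"
    then show ?thesis
      using space_M_not_empty by (simp add: subprob_space_null_measure)
  qed (rule prob_space_imp_subprob_space)
next
  fix A assume A: "A \<in> sets M"
  have [measurable]: "(\<lambda>s. emeasure (f t (fst s m)) A) \<in> borel_measurable (apf_SS M N)" if "m < N" for m
    using measurable_compose[OF measurable_particle[OF that]
        measurable_compose[OF f_subprob_kernel[OF t] measurable_emeasure_subprob_algebra[OF A]]] .
  note [measurable] = measurable_apf_w[OF t] measurable_total_weight[OF t]
  have "(\<lambda>s. \<Sum>m<N. ennreal (apf_w g t (fst s) m / total_weight t (fst s)) * emeasure (f t (fst s m)) A)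
      \<in> borel_measurable (apf_SS M N)"
    by measurable
  then show "(\<lambda>s. emeasure (apf_Q M f g N t (fst s)) A) \<in> borel_measurable (apf_SS M N)"
    by (rule measurable_cong[THEN iffD1, rotated]) (simp add: emeasure_apf_Q[OF t space_apf_SS_fst A])
qed simp

lemma measurable_apf_step_fn:
  assumes t: "t \<in> {1..T}"
  shows "(\<lambda>(s, \<omega>). apf_step_fn g N t (fst s) (snd s) \<omega>) \<in> apf_SS M N \<Otimes>\<^sub>M stream_space M \<rightarrow>\<^sub>M apf_SS M N"
proof -
  note [measurable] = g_measurable[OF t]
  show ?thesis
    unfolding apf_step_fn_eq_Least apf_SS_def by measurable
qed

lemma measurable_apf_step:
  assumes t: "t \<in> {1..T}"
  shows "apf_step M f g N t \<in> apf_SS M N \<rightarrow>\<^sub>M subprob_algebra (apf_SS M N)"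
proof -
  have "(\<lambda>s. stream_space (apf_Q M f g N t (fst s))) \<in> apf_SS M N \<rightarrow>\<^sub>M subprob_algebra (stream_space M)"
    using measurable_apf_Q[OF t] by (rule measurable_stream_space_kernel)
      (simp add: apf_Q_prob_or_null[OF t space_apf_SS_fst])
  then have "(\<lambda>s. distr (stream_space (apf_Q M f g N t (fst s))) (apf_SS M N) (apf_step_fn g N t (fst s) (snd s)))
      \<in> apf_SS M N \<rightarrow>\<^sub>M subprob_algebra (apf_SS M N)"
    using measurable_apf_step_fn[OF t] by (intro measurable_distr2) (simp_all add: case_prod_beta')
  then show ?thesis
    by (simp add: apf_step_def[abs_def])
qed

lemma measurable_apf_bk: "t + k \<le> T \<Longrightarrow> apf_bk f g k t \<in> borel_measurable M"
proof (induction k arbitrary: t)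
  case (Suc k)
  then have t: "Suc t \<in> {1..T}"
    by auto
  have [measurable]: "apf_bk f g k (Suc t) \<in> borel_measurable M"
    using Suc by simp
  note [measurable] = g_measurable[OF t]
  have "(\<lambda>x. ennreal (g (Suc t) x) * apf_bk f g k (Suc t) x) \<in> borel_measurable M"
    by measurable
  then show ?case
    using measurable_compose[OF f_subprob_kernel[OF t] nn_integral_measurable_subprob_algebra] by simp
qed (simp add: apf_bk.simps(1)[abs_def])

text \<open>The conditional expectation of the final estimate given the state after step \<open>t\<close>.\<close>

definition expected_estimate :: "nat \<Rightarrow> (nat \<Rightarrow> 'a) \<times> real \<Rightarrow> ennreal" where
  "expected_estimate t s = (if t = T then ennreal (snd s) else ennreal (snd s) *
     (\<Sum>m<N. ennreal (apf_w g (Suc t) (fst s) m / total_weight (Suc t) (fst s)) * apf_bk f g (T - t) t (fst s m)))"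

lemma measurable_expected_estimate:
  assumes "t \<le> T"
  shows "expected_estimate t \<in> borel_measurable (apf_SS M N)"
proof (cases "t = T")
  case False
  then have t: "Suc t \<in> {1..T}"
    using assms by simp
  have [measurable]: "(\<lambda>s. snd s) \<in> apf_SS M N \<rightarrow>\<^sub>M borel"
    unfolding apf_SS_def by simp
  have [measurable]: "(\<lambda>s. apf_bk f g (T - t) t (fst s m)) \<in> borel_measurable (apf_SS M N)" if "m < N" for m
    using measurable_compose[OF measurable_particle[OF that] measurable_apf_bk] assms by simp
  note [measurable] = measurable_apf_w[OF t] measurable_total_weight[OF t]
  show ?thesis
    unfolding expected_estimate_def by measurable
next
  case True
  then have "expected_estimate t = (\<lambda>s. ennreal (snd s))"
    by (simp add: expected_estimate_def fun_eq_iff)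
  then show ?thesis
    by (simp add: apf_SS_def)
qed

lemma expected_estimate_after_success:
  assumes t: "t < T" and pos: "\<And>n. n < N \<Longrightarrow> 0 < g (Suc t) (y n)" and r: "0 < r"
  shows "expected_estimate (Suc t) (restrict y {..<N}, Z * ((\<Sum>n<N. g (Suc t) (y n)) / r)) =
    ennreal Z * (\<Sum>n<N. ennreal (g (Suc t) (y n)) * apf_bk f g (T - Suc t) (Suc t) (y n)) * ennreal (1 / r)"
proof -
  define G where "G = (\<Sum>n<N. g (Suc t) (y n))"
  define b where "b x = apf_bk f g (T - Suc t) (Suc t) x" for x
  have G: "0 < G"
    unfolding G_def using pos N_pos by (intro sum_pos) auto
  have "expected_estimate (Suc t) (restrict y {..<N}, Z * (G / r)) =
      ennreal Z * (\<Sum>n<N. ennreal (g (Suc t) (y n)) * b (y n)) * ennreal (1 / r)"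
  proof (cases "0 \<le> Z")
    case False
    then have "Z * (G / r) \<le> 0"
      using G r by (intro mult_nonpos_nonneg) auto
    with False show ?thesis
      by (simp add: expected_estimate_def ennreal_neg)
  next
    case True
    have split: "ennreal (Z * G / r) = ennreal Z * ennreal (G / r)"
      using True G r by (simp add: ennreal_mult[symmetric])
    show ?thesis
    proof (cases "Suc t = T")
      case True
      have "(\<Sum>n<N. ennreal (g (Suc t) (y n))) = ennreal G"
        unfolding G_def using pos by (intro sum_ennreal) (auto intro: less_imp_le)
      then have "ennreal (G / r) = (\<Sum>n<N. ennreal (g (Suc t) (y n))) * ennreal (1 / r)"
        using G r by (simp add: ennreal_mult[symmetric])
      with True show ?thesis
        by (simp add: expected_estimate_def split b_def mult.assoc)
    next
      case False
      have weight: "ennreal (G / r) * ennreal (g (Suc t) (y n) / G) = ennreal (g (Suc t) (y n)) * ennreal (1 / r)"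
        if "n < N" for n
      proof -
        have "G / r * (g (Suc t) (y n) / G) = g (Suc t) (y n) * (1 / r)"
          using G by simp
        then show ?thesis
          using G r pos[OF that] by (simp add: ennreal_mult[symmetric])
      qed
      have "apf_w g (Suc (Suc t)) (restrict y {..<N}) m = g (Suc t) (y m)" if "m < N" for m
        using that by (simp add: apf_w_def)
      then have "(\<Sum>m<N. ennreal (apf_w g (Suc (Suc t)) (restrict y {..<N}) m / total_weight (Suc (Suc t)) (restrict y {..<N})) *
            apf_bk f g (T - Suc t) (Suc t) (restrict y {..<N} m)) = (\<Sum>m<N. ennreal (g (Suc t) (y m) / G) * b (y m))"
        by (intro sum.cong) (simp_all add: total_weight_def G_def b_def)
      then have "expected_estimate (Suc t) (restrict y {..<N}, Z * (G / r)) =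
          ennreal Z * (\<Sum>m<N. ennreal (G / r) * ennreal (g (Suc t) (y m) / G) * b (y m))"
        using False by (simp add: expected_estimate_def split sum_distrib_left mult.assoc)
      also have "\<dots> = ennreal Z * (\<Sum>n<N. ennreal (g (Suc t) (y n)) * b (y n) * ennreal (1 / r))"
      proof (intro arg_cong[where f = "(*) (ennreal Z)"] sum.cong refl)
        fix n assume "n \<in> {..<N}"
        then show "ennreal (G / r) * ennreal (g (Suc t) (y n) / G) * b (y n) =
            ennreal (g (Suc t) (y n)) * b (y n) * ennreal (1 / r)"
          by (subst weight) (simp_all add: ac_simps)
      qed
      also have "\<dots> = ennreal Z * (\<Sum>n<N. ennreal (g (Suc t) (y n)) * b (y n)) * ennreal (1 / r)"
        by (simp add: sum_distrib_right mult.assoc)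
      finally show ?thesis .
    qed
  qed
  then show ?thesis
    by (simp add: G_def b_def)
qed
lemma expected_estimate_apf_step_fn:
  assumes t: "t < T"
  shows "expected_estimate (Suc t) (apf_step_fn g N (Suc t) xs Z \<omega>) = ennreal Z *
    alive_estimate (\<lambda>x. 0 < g (Suc t) x) (\<lambda>x. ennreal (g (Suc t) x) * apf_bk f g (T - Suc t) (Suc t) x) N \<omega>"
proof (cases "infinite {k. 0 < g (Suc t) (\<omega> !! k)} \<or> N < card {k. 0 < g (Suc t) (\<omega> !! k)}")
  case True
  define e where "e = enumerate {k. 0 < g (Suc t) (\<omega> !! k)}"
  have pos: "0 < g (Suc t) (\<omega> !! e n)" if "n < N" for n
  proof -
    have "infinite {k. 0 < g (Suc t) (\<omega> !! k)} \<or> n < card {k. 0 < g (Suc t) (\<omega> !! k)}"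
      using True that by auto
    then show ?thesis
      using enumerate_in_set' unfolding e_def by blast
  qed
  have r: "0 < real (e N)"
    using le_enumerate'[OF True] N_pos by (simp add: e_def)
  have step: "apf_step_fn g N (Suc t) xs Z \<omega> =
      (restrict (\<lambda>n. \<omega> !! e n) {..<N}, Z * ((\<Sum>n<N. g (Suc t) (\<omega> !! e n)) / real (e N)))"
    unfolding e_def by (rule apf_step_fn_success[where g = g and t = "Suc t", OF True])
  show ?thesis
    unfolding step alive_estimate_eq[where S = "\<lambda>x. 0 < g (Suc t) x", OF True] e_def[symmetric]
    using expected_estimate_after_success[OF t pos r] by (simp only: mult.assoc)
next
  case False
  then show ?thesis
    by (simp add: apf_step_fn_fail alive_estimate_eq_0 expected_estimate_def)
qed

lemma nn_integral_apf_step: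
  assumes t: "t < T" and s: "s \<in> space (apf_SS M N)"
  shows "(\<integral>\<^sup>+s'. expected_estimate (Suc t) s' \<partial>apf_step M f g N (Suc t) s) = expected_estimate t s"
proof -
  obtain xs Z where s_eq: "s = (xs, Z)"
    by force
  have xs: "xs \<in> space (\<Pi>\<^sub>M i\<in>{..<N}. M)"
    using space_apf_SS_fst[OF s] by (simp add: s_eq)
  have t1: "Suc t \<in> {1..T}"
    using t by simp
  let ?Q = "apf_Q M f g N (Suc t) xs"
  let ?S = "\<lambda>x. 0 < g (Suc t) x"
  let ?\<phi> = "\<lambda>x. ennreal (g (Suc t) x) * apf_bk f g (T - Suc t) (Suc t) x"
  have "(\<lambda>\<omega>. apf_step_fn g N (Suc t) xs Z \<omega>) \<in> stream_space M \<rightarrow>\<^sub>M apf_SS M N"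
    using measurable_compose[OF measurable_Pair1'[OF s] measurable_apf_step_fn[OF t1]] by (simp add: s_eq)
  then have step_fn: "(\<lambda>\<omega>. apf_step_fn g N (Suc t) xs Z \<omega>) \<in> stream_space ?Q \<rightarrow>\<^sub>M apf_SS M N"
    by (simp add: measurable_cong_sets[OF sets_stream_space_cong[OF sets_apf_Q] refl])
  have "(\<integral>\<^sup>+s'. expected_estimate (Suc t) s' \<partial>apf_step M f g N (Suc t) s) =
      (\<integral>\<^sup>+\<omega>. expected_estimate (Suc t) (apf_step_fn g N (Suc t) xs Z \<omega>) \<partial>stream_space ?Q)"
    unfolding apf_step_def s_eq fst_conv snd_conv
    using t by (intro nn_integral_distr[OF step_fn]) (simp add: measurable_expected_estimate)
  also have "\<dots> = ennreal Z * (\<integral>\<^sup>+\<omega>. alive_estimate ?S ?\<phi> N \<omega> \<partial>stream_space ?Q)"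
    unfolding expected_estimate_apf_step_fn[OF t] using g_measurable[OF t1] measurable_apf_bk[of "Suc t" "T - Suc t"] t
    by (intro nn_integral_cmult) (simp add: measurable_cong_sets[OF sets_stream_space_cong[OF sets_apf_Q] refl])
  also have "\<dots> = expected_estimate t s"
  proof (cases "0 < total_weight (Suc t) xs")
    case False
    then have "total_weight (Suc t) xs = 0"
      using total_weight_nonneg[OF t1 xs] by simp
    then show ?thesis
      using t by (simp add: apf_Q_eq_null_measure total_weight_def stream_space_null_measure
          expected_estimate_def s_eq)
  next
    case True
    interpret Q: prob_space ?Q
      by (rule prob_space_apf_Q[OF t1 xs True])
    have [measurable]: "apf_bk f g (T - Suc t) (Suc t) \<in> borel_measurable M"
      using t by (intro measurable_apf_bk) simp
    note [measurable] = g_measurable[OF t1]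
    have "(\<integral>\<^sup>+\<omega>. alive_estimate ?S ?\<phi> N \<omega> \<partial>stream_space ?Q) = (\<integral>\<^sup>+x. (if ?S x then ?\<phi> x else 0) \<partial>?Q)"
      using N_pos by (intro Q.nn_integral_alive_estimate) (simp_all add: measurable_cong_sets[OF sets_apf_Q refl])
    also have "\<dots> = (\<integral>\<^sup>+x. ?\<phi> x \<partial>?Q)"
    proof (rule nn_integral_cong)
      fix x assume "x \<in> space ?Q"
      then have "0 \<le> g (Suc t) x"
        using g_nonneg[OF t1] by simp
      then show "(if ?S x then ?\<phi> x else 0) = ?\<phi> x"
        by auto
    qed
    also have "\<dots> = (\<Sum>m<N. ennreal (apf_w g (Suc t) xs m / total_weight (Suc t) xs) * apf_bk f g (T - t) t (xs m))"
    proof -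
      have "T - t = Suc (T - Suc t)"
        using t by simp
      then show ?thesis
        by (simp add: nn_integral_apf_Q[OF t1 xs])
    qed
    finally show ?thesis
      using t by (simp add: expected_estimate_def s_eq)
  qed
  finally show ?thesis .
qed

lemma sets_apf_run: "sets (apf_run M p0 f g N t) = sets (apf_SS M N)"
proof (induction t)
  case (Suc t)
  have "space (apf_run M p0 f g N t) \<noteq> {}"
    using sets_eq_imp_space_eq[OF Suc.IH] space_M_not_empty
    by (simp add: apf_SS_def space_pair_measure space_PiM_empty_iff)
  then show ?case
    by (simp only: apf_run.simps) (rule sets_bind[OF _ ]; simp add: apf_step_def)
qed simp

lemma nn_integral_apf_run_0: "(\<integral>\<^sup>+s. expected_estimate 0 s \<partial>apf_run M p0 f g N 0) = apf_marginal p0 f g T"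
proof -
  have sets_P0: "sets (\<Pi>\<^sub>M i\<in>{..<N}. p0) = sets (\<Pi>\<^sub>M i\<in>{..<N}. M)"
    by (rule sets_PiM_cong) (auto simp: sets_p0)
  have init: "(\<lambda>xs. (xs, 1::real)) \<in> (\<Pi>\<^sub>M i\<in>{..<N}. p0) \<rightarrow>\<^sub>M apf_SS M N"
    unfolding measurable_cong_sets[OF sets_P0 refl] apf_SS_def by measurable
  have bk_measurable: "apf_bk f g T 0 \<in> borel_measurable p0"
    using measurable_apf_bk[of 0 T] by (simp add: measurable_cong_sets[OF sets_p0 refl])
  have "(\<integral>\<^sup>+s. expected_estimate 0 s \<partial>apf_run M p0 f g N 0) =
      (\<integral>\<^sup>+xs. expected_estimate 0 (xs, 1) \<partial>(\<Pi>\<^sub>M i\<in>{..<N}. p0))"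
    by (simp only: apf_run.simps) (rule nn_integral_distr[OF init], simp add: measurable_expected_estimate)
  also have "\<dots> = apf_marginal p0 f g T"
  proof (cases "T = 0")
    case True
    interpret P: prob_space "\<Pi>\<^sub>M i\<in>{..<N}. p0"
      using prob_space_p0 by (intro prob_space_PiM) auto
    have "expected_estimate 0 s = ennreal (snd s)" for s
      unfolding expected_estimate_def using True by simp
    then show ?thesis
      using True prob_space.emeasure_space_1[OF prob_space_p0] P.emeasure_space_1
      by (simp add: apf_marginal_def)
  next
    case False
    have "(\<integral>\<^sup>+xs. expected_estimate 0 (xs, 1) \<partial>(\<Pi>\<^sub>M i\<in>{..<N}. p0)) =
        (\<integral>\<^sup>+xs. (\<Sum>m<N. ennreal (1 / real N) * apf_bk f g T 0 (xs m)) \<partial>(\<Pi>\<^sub>M i\<in>{..<N}. p0))"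
      using False by (simp add: expected_estimate_def apf_w_def total_weight_def)
    also have "\<dots> = (\<Sum>m<N. ennreal (1 / real N) * apf_marginal p0 f g T)"
      using prob_space_p0 bk_measurable
      by (simp add: nn_integral_sum nn_integral_cmult nn_integral_PiM_component apf_marginal_def)
    also have "\<dots> = apf_marginal p0 f g T"
      using N_pos by (simp add: ennreal_of_nat_eq_real_of_nat ennreal_mult[symmetric] mult.assoc[symmetric]
          del: ennreal_1) simp
    finally show ?thesis .
  qed
  finally show ?thesis .
qed

lemma nn_integral_apf_run: "t \<le> T \<Longrightarrow> (\<integral>\<^sup>+s. expected_estimate t s \<partial>apf_run M p0 f g N t) = apf_marginal p0 f g T"
proof (induction t)
  case 0
  show ?case
    by (rule nn_integral_apf_run_0)
next
  case (Suc t)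
  have step: "apf_step M f g N (Suc t) \<in> apf_run M p0 f g N t \<rightarrow>\<^sub>M subprob_algebra (apf_SS M N)"
    using measurable_apf_step[of "Suc t"] Suc.prems by (simp add: measurable_cong_sets[OF sets_apf_run refl])
  have "(\<integral>\<^sup>+s. expected_estimate (Suc t) s \<partial>apf_run M p0 f g N (Suc t)) =
      (\<integral>\<^sup>+s. \<integral>\<^sup>+s'. expected_estimate (Suc t) s' \<partial>apf_step M f g N (Suc t) s \<partial>apf_run M p0 f g N t)"
    using Suc.prems by (simp only: apf_run.simps) (rule nn_integral_bind[OF measurable_expected_estimate step])
  also have "\<dots> = (\<integral>\<^sup>+s. expected_estimate t s \<partial>apf_run M p0 f g N t)"
    using Suc.prems sets_eq_imp_space_eq[OF sets_apf_run]
    by (intro nn_integral_cong nn_integral_apf_step) auto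
  finally show ?case
    using Suc by simp
qed

end

theorem theorem1:
  fixes M :: "'a measure" and p0 :: "'a measure"
    and f :: "nat \<Rightarrow> 'a \<Rightarrow> 'a measure" and g :: "nat \<Rightarrow> 'a \<Rightarrow> real"
    and N T :: nat
  assumes "N \<ge> 1"
    and "prob_space p0" and "sets p0 = sets M"
    and "\<forall>t\<in>{1..T}. f t \<in> M \<rightarrow>\<^sub>M prob_algebra M"
    and "\<forall>t\<in>{1..T}. g t \<in> borel_measurable M"
    and "\<forall>t\<in>{1..T}. \<forall>x\<in>space M. 0 \<le> g t x"
  shows "(\<integral>\<^sup>+ s. ennreal (snd s) \<partial>apf_run M p0 f g N T) = apf_marginal p0 f g T"
proof -
  have "alive_particle_filter M p0 f g N T"
  proof (rule alive_particle_filter.intro)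
    show "0 < N"
      using assms(1) by simp
    show "f t \<in> M \<rightarrow>\<^sub>M prob_algebra M" if "t \<in> {1..T}" for t
      using assms(4) that by blast
    show "g t \<in> borel_measurable M" if "t \<in> {1..T}" for t
      using assms(5) that by blast
    show "0 \<le> g t x" if "t \<in> {1..T}" "x \<in> space M" for t x
      using assms(6) that by blast
  qed (fact assms(2,3))+
  then interpret alive_particle_filter M p0 f g N T .
  have "(\<integral>\<^sup>+s. expected_estimate T s \<partial>apf_run M p0 f g N T) = apf_marginal p0 f g T"
    by (rule nn_integral_apf_run) simp
  moreover have "expected_estimate T s = ennreal (snd s)" for s
    by (simp add: expected_estimate_def)
  ultimately show ?thesis
    by simp
qed

end
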